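(* Let $\mathcal F\subseteq\mathcal F_0$ be finite with $r(\mathcal F)\le\max\{(2\sqrt e)^{-1}(\Delta\kappa e)^{-\Delta/2},\,0.2058(\kappa+1)^{-\Delta}\}$. Let $G$ be a finite graph of maximum degree $\Delta$ and $\pi\colon V(G)\to\mathcal F$. Then $Z_{\mathcal F}(G,\pi)\neq0$, and, writing $P(t)=\sum_{\sigma\in D^{E}}\prod_vf_v(\sigma|_{E(v)})\,t^{|\{e:\sigma(e)\neq0\}|}/\prod_vf_v(\mathbf 0)$ (so $P(0)=1$ and $P(1)=Z_{\mathcal F}(G,\pi)/\prod_vf_v(\mathbf0)$), the Taylor series of $\log P(t)$ about $t=0$ converges absolutely at $t=1$.
   Context: $D=\{0,\dots,\kappa\}$; signatures $f\colon D^d\to\mathbb C$; $\mathcal F_0=\{f\mid f(\mathbf0)\neq0\}$; $r(f)=\max_{x\in D^d\setminus\{\mathbf0\}}|f(x)|/|f(\mathbf0)|$, $r(\mathcal F)=\max_{f\in\mathcal F}r(f)$. $G=(V,E)$ with fixed order on $E$, $E(v)$ the edges at $v$, $\pi$ assigns $f_v$ of arity $|E(v)|$; the Holant problem is $Z_{\mathcal F}(G,\pi)=\sum_{\sigma\in D^E}\prod_vf_v(\sigma|_{E(v)})$. *)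

theory Defs
  imports "HOL-Analysis.Analysis"
begin

text \<open>Domain D = {0..kappa}. A signature is a pair (d, f) of an arity d and a function
  on d-tuples (lists of length d) over D.\<close>

type_synonym signature = "nat \<times> (nat list \<Rightarrow> complex)"

definition tuples :: "nat \<Rightarrow> nat \<Rightarrow> nat list set" where
  "tuples \<kappa> d = {xs. length xs = d \<and> set xs \<subseteq> {0..\<kappa>}}"

definition arity :: "signature \<Rightarrow> nat" where "arity s = fst s"
definition sfun :: "signature \<Rightarrow> nat list \<Rightarrow> complex" where "sfun s = snd s"

definition zero_tuple :: "signature \<Rightarrow> nat list" where
  "zero_tuple s = replicate (arity s) 0"

definition F0 :: "signature set" where
  "F0 = {s. sfun s (zero_tuple s) \<noteq> 0}"

definition r_sig :: "nat \<Rightarrow> signature \<Rightarrow> real" where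
  "r_sig \<kappa> s = Max (insert 0
     ((\<lambda>x. cmod (sfun s x) / cmod (sfun s (zero_tuple s))) ` (tuples \<kappa> (arity s) - {zero_tuple s})))"

definition r_set :: "nat \<Rightarrow> signature set \<Rightarrow> real" where
  "r_set \<kappa> F = Max (insert 0 (r_sig \<kappa> ` F))"

text \<open>Graphs: vertex set V, edge set E, endpoint map ends (multigraph, no loops).\<close>
definition graph :: "'v set \<Rightarrow> 'e set \<Rightarrow> ('e \<Rightarrow> 'v set) \<Rightarrow> bool" where
  "graph V E ends \<longleftrightarrow> finite V \<and> finite E \<and> (\<forall>e\<in>E. ends e \<subseteq> V \<and> card (ends e) = 2)"

definition incident :: "'e set \<Rightarrow> ('e \<Rightarrow> 'v set) \<Rightarrow> 'v \<Rightarrow> 'e set" where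
  "incident E ends v = {e\<in>E. v \<in> ends e}"

definition restr :: "'e set \<Rightarrow> ('e \<Rightarrow> 'v set) \<Rightarrow> ('e::linorder \<Rightarrow> nat) \<Rightarrow> 'v \<Rightarrow> nat list" where
  "restr E ends \<sigma> v = map \<sigma> (sorted_list_of_set (incident E ends v))"

definition assignments :: "nat \<Rightarrow> 'e set \<Rightarrow> ('e \<Rightarrow> nat) set" where
  "assignments \<kappa> E = PiE E (\<lambda>_. {0..\<kappa>})"

definition weight :: "'v set \<Rightarrow> 'e set \<Rightarrow> ('e \<Rightarrow> 'v set) \<Rightarrow> ('v \<Rightarrow> signature)
    \<Rightarrow> ('e::linorder \<Rightarrow> nat) \<Rightarrow> complex" where
  "weight V E ends \<pi> \<sigma> = (\<Prod>v\<in>V. sfun (\<pi> v) (restr E ends \<sigma> v))"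

definition holant :: "nat \<Rightarrow> 'v set \<Rightarrow> 'e::linorder set \<Rightarrow> ('e \<Rightarrow> 'v set) \<Rightarrow> ('v \<Rightarrow> signature) \<Rightarrow> complex" where
  "holant \<kappa> V E ends \<pi> = (\<Sum>\<sigma>\<in>assignments \<kappa> E. weight V E ends \<pi> \<sigma>)"

definition holant_poly :: "nat \<Rightarrow> 'v set \<Rightarrow> 'e::linorder set \<Rightarrow> ('e \<Rightarrow> 'v set) \<Rightarrow> ('v \<Rightarrow> signature)
    \<Rightarrow> complex \<Rightarrow> complex" where
  "holant_poly \<kappa> V E ends \<pi> t =
     (\<Sum>\<sigma>\<in>assignments \<kappa> E. weight V E ends \<pi> \<sigma> * t ^ card {e\<in>E. \<sigma> e \<noteq> 0})
     / (\<Prod>v\<in>V. sfun (\<pi> v) (zero_tuple (\<pi> v)))"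

definition taylor_coeff :: "(complex \<Rightarrow> complex) \<Rightarrow> nat \<Rightarrow> complex" where
  "taylor_coeff g n = (deriv ^^ n) g 0 / of_nat (fact n)"

end

theory Submission
  imports Defs "HOL-Complex_Analysis.Complex_Analysis"
begin

text \<open>For a vertex set U and a boundary condition \<open>\<rho>\<close> on the edges leaving U, let
  \<open>Z\<^sub>U(\<rho>)\<close> be the partition function of the edges inside U at activity t, each signature
  divided by its value at 0. For \<open>|t| \<le> 21/20\<close> and a suitable \<open>K \<le> 1\<close> with
  \<open>2 r(F) \<le> K\<^sup>\<Delta>\<close>, induction on U shows \<open>Z\<^sub>U(0) \<noteq> 0\<close> and \<open>|Z\<^sub>U(\<rho>)| \<le> K\<^sup>n |Z\<^sub>U(0)|\<close>,
  where n counts the boundary edges with nonzero value. Expanding \<open>Z\<^sub>U\<close> along the inner edges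
  at a vertex v, every term that is nonzero at v carries a factor of modulus at most r(F) from
  \<open>f\<^sub>v\<close>, while the remaining factor, a partition function of \<open>U - {v}\<close>, is controlled by the
  induction hypothesis; summing over the d inner edges at v costs a factor \<open>(1 + \<kappa> |t| K)\<^sup>d\<close>,
  which the choice of K absorbs. Hence P has no zeros in the closed disc of radius 21/20, so
  log P is holomorphic on a disc of radius larger than 1 and its Taylor series converges
  absolutely at 1.\<close>

lemma holomorphic_log_ball_vanishing_at_0:
  fixes P :: "complex \<Rightarrow> complex"
  assumes "P holomorphic_on ball 0 s" "\<And>z. z \<in> ball 0 s \<Longrightarrow> P z \<noteq> 0" "P 0 = 1" "0 < s"
  obtains g where "g holomorphic_on ball 0 s" "\<And>z. z \<in> ball 0 s \<Longrightarrow> P z = exp (g z)" "g 0 = 0"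
proof -
  obtain g where g: "g holomorphic_on ball 0 s" and P_exp: "\<And>z. z \<in> ball 0 s \<Longrightarrow> P z = exp (g z)"
    using contractible_imp_holomorphic_log[OF assms(1) convex_imp_contractible assms(2)] by auto
  have "exp (g 0) = 1" using P_exp[of 0] assms(3,4) by simp
  hence "P z = exp (g z - g 0)" if "z \<in> ball 0 s" for z
    using P_exp[OF that] by (simp add: exp_diff)
  moreover have "(\<lambda>z. g z - g 0) holomorphic_on ball 0 s" using g by (intro holomorphic_intros)
  ultimately show thesis by (intro that[of "\<lambda>z. g z - g 0"]) auto
qed

text \<open>Near 0, \<open>Ln \<circ> P\<close> coincides with the holomorphic logarithm of \<open>P\<close> on the whole ball.\<close>
lemma summable_norm_taylor_coeff_Ln:
  fixes P :: "complex \<Rightarrow> complex"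
  assumes holo: "P holomorphic_on ball 0 s" and nonzero: "\<And>z. z \<in> ball 0 s \<Longrightarrow> P z \<noteq> 0"
    and "P 0 = 1" and "norm w < s"
  shows "summable (\<lambda>n. norm (taylor_coeff (\<lambda>t. Ln (P t)) n * w ^ n))"
proof -
  have "0 < s" using assms(4) norm_ge_zero[of w] by linarith
  then obtain g where g: "g holomorphic_on ball 0 s" and P_exp: "\<And>z. z \<in> ball 0 s \<Longrightarrow> P z = exp (g z)"
    and "g 0 = 0"
    using holomorphic_log_ball_vanishing_at_0[OF assms(1-3)] by blast
  have "isCont g 0"
    using g \<open>0 < s\<close> by (metis centre_in_ball continuous_on_interior holomorphic_on_imp_continuous_on interior_ball)
  hence "(g \<longlongrightarrow> 0) (nhds 0)" using \<open>g 0 = 0\<close> by (simp add: isCont_def tendsto_nhds_iff)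
  hence "eventually (\<lambda>z. cmod (g z) < pi) (nhds 0)"
    by (metis order_tendsto_iff pi_gt_zero tendsto_norm_zero_iff)
  moreover have "eventually (\<lambda>z. z \<in> ball 0 s) (nhds 0)"
    using \<open>0 < s\<close> by (intro eventually_nhds_in_open) auto
  ultimately have "eventually (\<lambda>z. Ln (P z) = g z) (nhds 0)"
  proof eventually_elim
    case (elim z)
    then show ?case using P_exp abs_Im_le_cmod[of "g z"] by (simp add: Ln_exp)
  qed
  hence coeff: "taylor_coeff (\<lambda>t. Ln (P t)) n = (deriv ^^ n) g 0 / fact n" for n
    unfolding taylor_coeff_def by (simp add: higher_deriv_cong_ev)
  define r :: complex where "r = of_real ((norm w + s) / 2)"
  have "norm r = (norm w + s) / 2" unfolding r_def norm_of_real using \<open>0 < s\<close> by simp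
  hence "r \<in> ball 0 s" "norm w < norm r" using assms(4) by auto
  have "(\<lambda>n. (deriv ^^ n) g 0 / fact n * (r - 0) ^ n) sums g r"
    by (rule holomorphic_power_series[OF g \<open>r \<in> ball 0 s\<close>])
  hence "summable (\<lambda>n. (deriv ^^ n) g 0 / fact n * r ^ n)" by (simp add: sums_summable)
  from powser_insidea[OF this \<open>norm w < norm r\<close>] show ?thesis by (simp add: coeff)
qed

lemma inverse_Suc_rate:
  "1 / (real k + 1) * (1 + real k * (21/20) * (1 / (real k + 1))) \<le> 1"
proof -
  have "real k + 1 + real k * (21/20) \<le> (real k + 1) ^ 2"
    by (cases k) (auto simp: power2_eq_square algebra_simps)
  thus ?thesis by (simp add: field_simps power2_eq_square)
qed

text \<open>With \<open>e \<ge> 2.7\<close> the hypothesis gives \<open>K \<le> 0.61\<close> and \<open>\<kappa> K\<^sup>2 \<le> 1/2.7\<close>, and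
  \<open>0.61 + 1.05/2.7 < 1\<close>.\<close>
lemma rate_of_square_bound:
  fixes K :: real
  assumes "0 \<le> K" "1 \<le> \<Delta>" "1 \<le> k" "K\<^sup>2 * (real \<Delta> * real k * exp 1) \<le> 1"
  shows "K \<le> 1" "K * (1 + real k * (21/20) * K) \<le> 1"
proof -
  have e: "27/10 \<le> exp (1::real)" using e_approx_32 unfolding abs_le_iff by simp
  have "1 \<le> real \<Delta> * real k" using assms(2,3) mult_mono[of 1 "real \<Delta>" 1 "real k"] by simp
  hence "K\<^sup>2 * exp 1 \<le> K\<^sup>2 * (real \<Delta> * real k * exp 1)"
    by (intro mult_left_mono) auto
  moreover have "K\<^sup>2 * (27/10) \<le> K\<^sup>2 * exp 1" using e by (intro mult_left_mono) auto
  ultimately have "K\<^sup>2 \<le> (61/100)\<^sup>2" using assms(4) by (simp add: power2_eq_square)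
  hence K: "K \<le> 61/100" by (rule power2_le_imp_le) simp
  have "real k * K\<^sup>2 * exp 1 \<le> real \<Delta> * (real k * K\<^sup>2 * exp 1)"
    using assms(2) mult_right_mono[of 1 "real \<Delta>" "real k * K\<^sup>2 * exp 1"] by simp
  moreover have "real k * K\<^sup>2 * (27/10) \<le> real k * K\<^sup>2 * exp 1" using e by (intro mult_left_mono) auto
  ultimately have "real k * K\<^sup>2 * (27/10) \<le> 1" using assms(4) by (simp add: mult_ac)
  with K show "K \<le> 1" "K * (1 + real k * (21/20) * K) \<le> 1"
    by (simp_all add: algebra_simps power2_eq_square)
qed

lemma power2_mult_le_1_if_power_eq:
  fixes K X :: real
  assumes "1 \<le> \<Delta>" "0 < X" "K ^ \<Delta> = inverse (sqrt (exp 1)) * inverse (sqrt (X ^ \<Delta>))"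
  shows "K\<^sup>2 * X \<le> 1"
proof -
  have "(K\<^sup>2) ^ \<Delta> = (K ^ \<Delta>)\<^sup>2" by (simp flip: power_mult add: mult.commute)
  also have "\<dots> = inverse (exp 1 * X ^ \<Delta>)"
    unfolding assms(3) using assms(2) by (simp add: power_mult_distrib power_inverse inverse_mult_distrib)
  also have "\<dots> \<le> inverse (X ^ \<Delta>)"
    using assms(2) by (intro le_imp_inverse_le) auto
  also have "\<dots> = (inverse X) ^ \<Delta>" by (rule power_inverse[symmetric])
  finally have "(K\<^sup>2) ^ \<Delta> \<le> (inverse X) ^ \<Delta>" .
  moreover obtain n where "\<Delta> = Suc n" using assms(1) by (metis Suc_le_D One_nat_def)
  ultimately have "K\<^sup>2 \<le> inverse X"
    using assms(2) power_le_imp_le_base[of "K\<^sup>2" n "inverse X"] by simp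
  hence "K\<^sup>2 * X \<le> inverse X * X" using assms(2) by (intro mult_right_mono) auto
  also have "\<dots> = 1" using assms(2) by simp
  finally show ?thesis .
qed

text \<open>Since \<open>0.2058 < 1/2\<close>, either \<open>K = 1/(\<kappa> + 1)\<close> works, or \<open>R\<close> is bounded by the first term
  \<open>A\<close> of the maximum and \<open>K = (2A)\<^bsup>1/\<Delta>\<^esup>\<close> works.\<close>
lemma contraction_rate_exists:
  fixes R :: real
  assumes "R \<le> max (inverse (2 * sqrt (exp 1)) * inverse (sqrt ((real \<Delta> * real k * exp 1) ^ \<Delta>)))
                      (0.2058 / (real k + 1) ^ \<Delta>)"
  obtains K where "0 < K" "K \<le> 1" "K * (1 + real k * (21/20) * K) \<le> 1" "2 * R \<le> K ^ \<Delta>"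
proof (cases "2 * R \<le> (1 / (real k + 1)) ^ \<Delta>")
  case True
  then show thesis using inverse_Suc_rate[of k] by (intro that[of "1 / (real k + 1)"]) auto
next
  case False
  define X where "X = real \<Delta> * real k * exp 1"
  define A where "A = inverse (2 * sqrt (exp 1)) * inverse (sqrt (X ^ \<Delta>))"
  have "0.2058 / (real k + 1) ^ \<Delta> < R"
    using False by (simp add: power_divide field_simps)
  hence "R \<le> A" using assms by (auto simp: A_def X_def)
  have "1 \<le> \<Delta>"
  proof (rule ccontr)
    assume "\<not> 1 \<le> \<Delta>"
    hence "\<Delta> = 0" by simp
    hence "A = inverse (2 * sqrt (exp 1))" by (simp add: A_def)
    also have "\<dots> \<le> 1 / 2" by (simp add: field_simps)
    finally show False using False \<open>R \<le> A\<close> \<open>\<Delta> = 0\<close> by simp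
  qed
  have "1 \<le> k"
  proof (rule ccontr)
    assume "\<not> 1 \<le> k"
    hence "A = 0" using \<open>1 \<le> \<Delta>\<close> by (simp add: A_def X_def)
    moreover have "0 \<le> (1 / (real k + 1)) ^ \<Delta>" by simp
    ultimately show False using False \<open>R \<le> A\<close> by linarith
  qed
  hence "0 < X" using \<open>1 \<le> \<Delta>\<close> by (simp add: X_def)
  hence "0 < A" by (simp add: A_def)
  define K where "K = root \<Delta> (2 * A)"
  have "0 < K" "K ^ \<Delta> = 2 * A" using \<open>0 < A\<close> \<open>1 \<le> \<Delta>\<close> by (simp_all add: K_def)
  hence "K\<^sup>2 * X \<le> 1"
    using \<open>1 \<le> \<Delta>\<close> \<open>0 < X\<close> by (intro power2_mult_le_1_if_power_eq) (auto simp: A_def)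
  with \<open>0 < K\<close> \<open>1 \<le> \<Delta>\<close> \<open>1 \<le> k\<close> have "K \<le> 1" "K * (1 + real k * (21/20) * K) \<le> 1"
    using rate_of_square_bound[of K \<Delta> k] unfolding X_def by auto
  moreover have "2 * R \<le> K ^ \<Delta>" using \<open>K ^ \<Delta> = 2 * A\<close> \<open>R \<le> A\<close> by simp
  ultimately show thesis using \<open>0 < K\<close> that by blast
qed

lemma sum_PiE_Un_override_on:
  assumes "A \<inter> B = {}"
  shows "(\<Sum>\<sigma>\<in>PiE (A \<union> B) (\<lambda>_. D). f \<sigma>)
       = (\<Sum>\<tau>\<in>PiE B (\<lambda>_. D). \<Sum>\<sigma>\<in>PiE A (\<lambda>_. D). f (override_on \<sigma> \<tau> B))"
proof -
  have "bij_betw (\<lambda>(\<tau>, \<sigma>). override_on \<sigma> \<tau> B) (PiE B (\<lambda>_. D) \<times> PiE A (\<lambda>_. D)) (PiE (A \<union> B) (\<lambda>_. D))"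
    by (rule bij_betw_byWitness[where f' = "\<lambda>\<sigma>. (restrict \<sigma> B, restrict \<sigma> A)"])
       (use assms in \<open>auto simp: override_on_def PiE_iff extensional_def fun_eq_iff\<close>)
  hence "(\<Sum>\<sigma>\<in>PiE (A \<union> B) (\<lambda>_. D). f \<sigma>)
      = (\<Sum>(\<tau>, \<sigma>)\<in>PiE B (\<lambda>_. D) \<times> PiE A (\<lambda>_. D). f (override_on \<sigma> \<tau> B))"
    by (simp add: sum.reindex_bij_betw[symmetric] case_prod_unfold)
  thus ?thesis by (simp add: sum.cartesian_product)
qed

lemma sum_PiE_power_card_nonzero:
  fixes c :: "'a::comm_semiring_1"
  assumes "finite B"
  shows "(\<Sum>\<tau>\<in>PiE B (\<lambda>_. {0..k}). c ^ card {e\<in>B. \<tau> e \<noteq> 0}) = (1 + of_nat k * c) ^ card B"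
proof -
  have "c ^ card {e\<in>B. \<tau> e \<noteq> 0} = (\<Prod>e\<in>B. if \<tau> e = 0 then 1 else c)" for \<tau> :: "_ \<Rightarrow> nat"
    using assms by (simp add: prod.If_cases Int_def)
  hence "(\<Sum>\<tau>\<in>PiE B (\<lambda>_. {0..k}). c ^ card {e\<in>B. \<tau> e \<noteq> 0})
      = (\<Sum>\<tau>\<in>PiE B (\<lambda>_. {0..k}). \<Prod>e\<in>B. if \<tau> e = 0 then 1 else c)"
    by simp
  also have "\<dots> = (\<Prod>e\<in>B. \<Sum>x\<in>{0..k}. if x = 0 then 1 else c)"
    by (rule prod_sum_PiE[symmetric]) (use assms in auto)
  also have "\<dots> = (1 + of_nat k * c) ^ card B"
  proof -
    have "{x. x = 0 \<and> x \<le> k} = {0}" "{x. x \<le> k \<and> 0 < x} = {1..k}" by auto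
    thus ?thesis by (simp add: sum.If_cases Int_def)
  qed
  finally show ?thesis .
qed

lemma mult_power_le_power:
  fixes C K y :: real
  assumes "0 < K" "K \<le> 1" "0 \<le> C" "C \<le> K ^ D" "0 \<le> y" "y * K \<le> 1" "m + p \<le> D"
  shows "C * y ^ m \<le> K ^ p"
proof -
  have "y ^ m * K ^ m \<le> 1" using assms by (simp add: power_le_one flip: power_mult_distrib)
  have "C \<le> K ^ m * K ^ p"
    using assms power_decreasing[of "m + p" D K] by (simp add: power_add)
  have "K ^ m * (C * y ^ m) = C * (y ^ m * K ^ m)" by (simp add: algebra_simps)
  also have "\<dots> \<le> C" using \<open>y ^ m * K ^ m \<le> 1\<close> assms(3) by (simp add: mult_left_le)
  also have "\<dots> \<le> K ^ m * K ^ p" by fact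
  finally show ?thesis using assms(1) by (simp add: mult_le_cancel_left)
qed

lemma PiE_ex_nonzero_if_ne_zero:
  assumes "\<sigma> \<in> PiE B D" "\<sigma> \<noteq> restrict (\<lambda>_. 0) B"
  shows "\<exists>e\<in>B. \<sigma> e \<noteq> 0"
  using assms by (auto simp: PiE_iff extensional_def fun_eq_iff split: if_splits)

definition inner_edges :: "'e set \<Rightarrow> ('e \<Rightarrow> 'v set) \<Rightarrow> 'v set \<Rightarrow> 'e set" where
  "inner_edges E ends U = {e\<in>E. ends e \<subseteq> U}"

definition boundary_edges :: "'e set \<Rightarrow> ('e \<Rightarrow> 'v set) \<Rightarrow> 'v set \<Rightarrow> 'e set" where
  "boundary_edges E ends U = {e\<in>E. \<not> ends e \<subseteq> U \<and> ends e \<inter> U \<noteq> {}}"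

locale bounded_holant =
  fixes \<kappa> :: nat and V :: "'v set" and E :: "'e::linorder set" and ends :: "'e \<Rightarrow> 'v set"
    and \<pi> :: "'v \<Rightarrow> signature" and \<Delta> :: nat and R :: real
  assumes graph: "graph V E ends"
    and degree_le: "\<And>v. v \<in> V \<Longrightarrow> card (incident E ends v) \<le> \<Delta>"
    and arity_eq: "\<And>v. v \<in> V \<Longrightarrow> arity (\<pi> v) = card (incident E ends v)"
    and value_at_zero_nonzero: "\<And>v. v \<in> V \<Longrightarrow> sfun (\<pi> v) (zero_tuple (\<pi> v)) \<noteq> 0"
    and ratio_le: "\<And>v x. v \<in> V \<Longrightarrow> x \<in> tuples \<kappa> (arity (\<pi> v)) - {zero_tuple (\<pi> v)} \<Longrightarrow>
                     cmod (sfun (\<pi> v) x) / cmod (sfun (\<pi> v) (zero_tuple (\<pi> v))) \<le> R"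
    and R_nonneg: "0 \<le> R"
begin

definition normalized :: "'v \<Rightarrow> nat list \<Rightarrow> complex" where
  "normalized v x = sfun (\<pi> v) x / sfun (\<pi> v) (zero_tuple (\<pi> v))"

definition Z :: "complex \<Rightarrow> 'v set \<Rightarrow> ('e \<Rightarrow> nat) \<Rightarrow> complex" where
  "Z t U \<rho> = (\<Sum>\<sigma>\<in>PiE (inner_edges E ends U) (\<lambda>_. {0..\<kappa>}).
      (\<Prod>w\<in>U. normalized w (restr E ends (override_on \<rho> \<sigma> (inner_edges E ends U)) w))
      * t ^ card {e\<in>inner_edges E ends U. \<sigma> e \<noteq> 0})"

definition boundary_support :: "'v set \<Rightarrow> ('e \<Rightarrow> nat) \<Rightarrow> nat" where
  "boundary_support U \<rho> = card {e\<in>boundary_edges E ends U. \<rho> e \<noteq> 0}"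

definition inner_edges_at :: "'v set \<Rightarrow> 'v \<Rightarrow> 'e set" where
  "inner_edges_at U v = {e\<in>inner_edges E ends U. v \<in> ends e}"

definition expansion_term :: "complex \<Rightarrow> 'v set \<Rightarrow> 'v \<Rightarrow> ('e \<Rightarrow> nat) \<Rightarrow> ('e \<Rightarrow> nat) \<Rightarrow> complex" where
  "expansion_term t U v \<rho> \<tau> =
     normalized v (restr E ends (override_on \<rho> \<tau> (inner_edges_at U v)) v)
     * t ^ card {e\<in>inner_edges_at U v. \<tau> e \<noteq> 0}
     * Z t (U - {v}) (override_on \<rho> \<tau> (inner_edges_at U v))"

lemma finite_V: "finite V" and finite_E: "finite E"
  and ends_subset: "e \<in> E \<Longrightarrow> ends e \<subseteq> V" and card_ends: "e \<in> E \<Longrightarrow> card (ends e) = 2"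
  using graph by (auto simp: graph_def)

lemma finite_incident: "finite (incident E ends v)"
  using finite_E by (simp add: incident_def)

lemma finite_inner_edges_at: "finite (inner_edges_at U v)"
  using finite_E by (simp add: inner_edges_at_def inner_edges_def)

lemma finite_boundary_edges: "finite (boundary_edges E ends U)"
  using finite_E by (simp add: boundary_edges_def)

lemma restr_cong:
  assumes "\<And>e. e \<in> incident E ends v \<Longrightarrow> \<sigma> e = \<sigma>' e"
  shows "restr E ends \<sigma> v = restr E ends \<sigma>' v"
  unfolding restr_def using assms finite_incident by simp

lemma normalized_restr_zero:
  assumes "v \<in> V" "\<And>e. e \<in> incident E ends v \<Longrightarrow> \<sigma> e = 0"
  shows "normalized v (restr E ends \<sigma> v) = 1"
proof -
  have "restr E ends \<sigma> v = restr E ends (\<lambda>_. 0) v" by (rule restr_cong) (use assms in auto)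
  also have "\<dots> = zero_tuple (\<pi> v)"
    using arity_eq[OF assms(1)] finite_incident by (simp add: restr_def zero_tuple_def map_replicate_const)
  finally show ?thesis using value_at_zero_nonzero[OF assms(1)] by (simp add: normalized_def)
qed

lemma norm_normalized_restr_le:
  assumes "v \<in> V" "\<And>e. e \<in> incident E ends v \<Longrightarrow> \<sigma> e \<le> \<kappa>"
    and "e \<in> incident E ends v" "\<sigma> e \<noteq> 0"
  shows "cmod (normalized v (restr E ends \<sigma> v)) \<le> R"
proof -
  let ?x = "restr E ends \<sigma> v"
  have "?x \<in> tuples \<kappa> (arity (\<pi> v))"
    using assms(2) arity_eq[OF assms(1)] finite_incident by (auto simp: restr_def tuples_def)
  moreover have "\<sigma> e \<in> set ?x" using assms(3) finite_incident by (simp add: restr_def)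
  hence "?x \<noteq> zero_tuple (\<pi> v)" using assms(4) by (auto simp: zero_tuple_def)
  ultimately show ?thesis using ratio_le[OF assms(1)] by (simp add: normalized_def norm_divide)
qed

lemma Z_empty: "Z t {} \<rho> = 1"
proof -
  have "inner_edges E ends {} = {}" using card_ends by (fastforce simp: inner_edges_def)
  thus ?thesis by (simp add: Z_def)
qed

lemma Z_cong:
  assumes "\<And>e. e \<in> boundary_edges E ends U \<Longrightarrow> \<rho> e = \<rho>' e"
  shows "Z t U \<rho> = Z t U \<rho>'"
  unfolding Z_def
proof (intro sum.cong refl arg_cong2[where f = "(*)"] prod.cong arg_cong[where f = "normalized _"] restr_cong)
  fix \<sigma> w e assume "w \<in> U" "e \<in> incident E ends w"
  thus "override_on \<rho> \<sigma> (inner_edges E ends U) e = override_on \<rho>' \<sigma> (inner_edges E ends U) e"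
    using assms by (auto simp: override_on_def incident_def inner_edges_def boundary_edges_def)
qed

lemma Z_expand:
  assumes "finite U" "v \<in> U"
  shows "Z t U \<rho> = (\<Sum>\<tau>\<in>PiE (inner_edges_at U v) (\<lambda>_. {0..\<kappa>}). expansion_term t U v \<rho> \<tau>)"
proof -
  define A where "A = inner_edges E ends (U - {v})"
  define Ev where "Ev = inner_edges_at U v"
  have split: "inner_edges E ends U = A \<union> Ev" "A \<inter> Ev = {}"
    by (auto simp: A_def Ev_def inner_edges_at_def inner_edges_def)
  have "finite A" using finite_E by (simp add: A_def inner_edges_def)
  have "(\<Prod>w\<in>U. normalized w (restr E ends (override_on \<rho> (override_on \<sigma> \<tau> Ev) (A \<union> Ev)) w))
        * t ^ card {e\<in>A \<union> Ev. override_on \<sigma> \<tau> Ev e \<noteq> 0}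
      = normalized v (restr E ends (override_on \<rho> \<tau> Ev) v) * t ^ card {e\<in>Ev. \<tau> e \<noteq> 0}
        * ((\<Prod>w\<in>U - {v}. normalized w (restr E ends (override_on (override_on \<rho> \<tau> Ev) \<sigma> A) w))
           * t ^ card {e\<in>A. \<sigma> e \<noteq> 0})" for \<sigma> \<tau>
  proof -
    have "override_on \<rho> (override_on \<sigma> \<tau> Ev) (A \<union> Ev) = override_on (override_on \<rho> \<tau> Ev) \<sigma> A"
      using split(2) by (auto simp: override_on_def fun_eq_iff)
    moreover have "restr E ends (override_on (override_on \<rho> \<tau> Ev) \<sigma> A) v = restr E ends (override_on \<rho> \<tau> Ev) v"
      by (rule restr_cong) (auto simp: override_on_def A_def inner_edges_def incident_def)
    moreover have "{e\<in>A \<union> Ev. override_on \<sigma> \<tau> Ev e \<noteq> 0} = {e\<in>A. \<sigma> e \<noteq> 0} \<union> {e\<in>Ev. \<tau> e \<noteq> 0}"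
      using split(2) by (auto simp: override_on_def)
    moreover have "card ({e\<in>A. \<sigma> e \<noteq> 0} \<union> {e\<in>Ev. \<tau> e \<noteq> 0}) = card {e\<in>A. \<sigma> e \<noteq> 0} + card {e\<in>Ev. \<tau> e \<noteq> 0}"
      using \<open>finite A\<close> finite_inner_edges_at split(2) by (intro card_Un_disjoint) (auto simp: Ev_def)
    ultimately show ?thesis
      by (simp add: prod.remove[OF assms] power_add algebra_simps)
  qed
  hence "Z t U \<rho> = (\<Sum>\<tau>\<in>PiE Ev (\<lambda>_. {0..\<kappa>}). normalized v (restr E ends (override_on \<rho> \<tau> Ev) v)
      * t ^ card {e\<in>Ev. \<tau> e \<noteq> 0} * Z t (U - {v}) (override_on \<rho> \<tau> Ev))"
    unfolding Z_def split(1) sum_PiE_Un_override_on[OF split(2)] by (simp add: A_def sum_distrib_left)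
  thus ?thesis by (simp add: expansion_term_def Ev_def)
qed

lemma card_boundary_inner_le_boundary_support_delete:
  assumes "v \<in> U"
  shows "card {e\<in>boundary_edges E ends U. \<rho> e \<noteq> 0 \<and> v \<notin> ends e} + card {e\<in>inner_edges_at U v. \<tau> e \<noteq> 0}
    \<le> boundary_support (U - {v}) (override_on \<rho> \<tau> (inner_edges_at U v))"
proof -
  have "card {e\<in>boundary_edges E ends U. \<rho> e \<noteq> 0 \<and> v \<notin> ends e} + card {e\<in>inner_edges_at U v. \<tau> e \<noteq> 0}
      = card ({e\<in>boundary_edges E ends U. \<rho> e \<noteq> 0 \<and> v \<notin> ends e} \<union> {e\<in>inner_edges_at U v. \<tau> e \<noteq> 0})"
    using finite_E
    by (intro card_Un_disjoint[symmetric]) (auto simp: boundary_edges_def inner_edges_at_def inner_edges_def)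
  also have "\<dots> \<le> boundary_support (U - {v}) (override_on \<rho> \<tau> (inner_edges_at U v))"
    unfolding boundary_support_def
  proof (intro card_mono finite_subset[OF _ finite_boundary_edges] subsetI)
    fix e assume e: "e \<in> {e\<in>boundary_edges E ends U. \<rho> e \<noteq> 0 \<and> v \<notin> ends e} \<union> {e\<in>inner_edges_at U v. \<tau> e \<noteq> 0}"
    from e show "e \<in> {e\<in>boundary_edges E ends (U - {v}). override_on \<rho> \<tau> (inner_edges_at U v) e \<noteq> 0}"
    proof
      assume "e \<in> {e\<in>boundary_edges E ends U. \<rho> e \<noteq> 0 \<and> v \<notin> ends e}"
      thus ?thesis by (auto simp: boundary_edges_def inner_edges_at_def inner_edges_def override_on_def)
    next
      assume e: "e \<in> {e\<in>inner_edges_at U v. \<tau> e \<noteq> 0}"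
      hence "e \<in> E" "ends e \<subseteq> U" "v \<in> ends e" "\<tau> e \<noteq> 0"
        by (auto simp: inner_edges_at_def inner_edges_def)
      moreover have "ends e - {v} \<noteq> {}"
        using card_ends[OF \<open>e \<in> E\<close>] by (metis card_2_iff' insert_iff Diff_iff)
      ultimately show ?thesis using e by (auto simp: boundary_edges_def override_on_def)
    qed
  qed auto
  finally show ?thesis .
qed

lemma boundary_support_split:
  "boundary_support U \<rho> = card {e\<in>boundary_edges E ends U. \<rho> e \<noteq> 0 \<and> v \<notin> ends e}
                         + card {e\<in>boundary_edges E ends U. \<rho> e \<noteq> 0 \<and> v \<in> ends e}"
proof -
  have "{e\<in>boundary_edges E ends U. \<rho> e \<noteq> 0} = {e\<in>boundary_edges E ends U. \<rho> e \<noteq> 0 \<and> v \<notin> ends e}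
      \<union> {e\<in>boundary_edges E ends U. \<rho> e \<noteq> 0 \<and> v \<in> ends e}" by auto
  thus ?thesis
    unfolding boundary_support_def by (simp add: card_Un_disjoint finite_boundary_edges disjoint_iff)
qed

lemma card_inner_edges_at_add_le_degree:
  assumes "v \<in> V"
  shows "card (inner_edges_at U v) + card {e\<in>boundary_edges E ends U. \<rho> e \<noteq> 0 \<and> v \<in> ends e} \<le> \<Delta>"
proof -
  have "card (inner_edges_at U v) + card {e\<in>boundary_edges E ends U. \<rho> e \<noteq> 0 \<and> v \<in> ends e}
      = card (inner_edges_at U v \<union> {e\<in>boundary_edges E ends U. \<rho> e \<noteq> 0 \<and> v \<in> ends e})"
    using finite_E
    by (intro card_Un_disjoint[symmetric]) (auto simp: boundary_edges_def inner_edges_at_def inner_edges_def)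
  also have "\<dots> \<le> card (incident E ends v)"
    by (intro card_mono finite_incident)
       (auto simp: inner_edges_at_def inner_edges_def boundary_edges_def incident_def)
  also have "\<dots> \<le> \<Delta>" using degree_le[OF assms] .
  finally show ?thesis .
qed

context
  fixes t :: complex and s K :: real
  assumes t_le: "cmod t \<le> s" and K_pos: "0 < K" and K_le_1: "K \<le> 1"
    and K_rate: "K * (1 + real \<kappa> * s * K) \<le> 1" and R_le: "2 * R \<le> K ^ \<Delta>"
begin

definition boundary_decay :: "'v set \<Rightarrow> bool" where
  "boundary_decay U \<longleftrightarrow>
     (\<forall>\<rho>. (\<forall>e. \<rho> e \<le> \<kappa>) \<longrightarrow> cmod (Z t U \<rho>) \<le> K ^ boundary_support U \<rho> * cmod (Z t U (\<lambda>_. 0)))"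

lemma s_nonneg: "0 \<le> s"
  using t_le norm_ge_zero order_trans by blast

lemma sum_PiE_inner_edges_at_power:
  "(\<Sum>\<tau>\<in>PiE (inner_edges_at U v) (\<lambda>_. {0..\<kappa>}). (s * K) ^ card {e\<in>inner_edges_at U v. \<tau> e \<noteq> 0})
    = (1 + real \<kappa> * s * K) ^ card (inner_edges_at U v)"
  using sum_PiE_power_card_nonzero[OF finite_inner_edges_at] by (simp add: mult.assoc)

lemma twice_R_mult_power_le: "m + p \<le> \<Delta> \<Longrightarrow> 2 * R * (1 + real \<kappa> * s * K) ^ m \<le> K ^ p"
  using K_pos K_le_1 R_nonneg R_le s_nonneg K_rate
  by (intro mult_power_le_power) (auto simp: algebra_simps)

lemma norm_expansion_term_le:
  assumes "U \<subseteq> V" "v \<in> U" "boundary_decay (U - {v})" "\<forall>e. \<rho> e \<le> \<kappa>"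
    and \<tau>: "\<tau> \<in> PiE (inner_edges_at U v) (\<lambda>_. {0..\<kappa>})"
    and "e \<in> incident E ends v" "override_on \<rho> \<tau> (inner_edges_at U v) e \<noteq> 0"
  shows "cmod (expansion_term t U v \<rho> \<tau>)
    \<le> R * (s * K) ^ card {e\<in>inner_edges_at U v. \<tau> e \<noteq> 0}
      * K ^ card {e\<in>boundary_edges E ends U. \<rho> e \<noteq> 0 \<and> v \<notin> ends e} * cmod (Z t (U - {v}) (\<lambda>_. 0))"
proof -
  let ?\<rho>' = "override_on \<rho> \<tau> (inner_edges_at U v)"
  let ?n = "card {e\<in>inner_edges_at U v. \<tau> e \<noteq> 0}"
  let ?q = "card {e\<in>boundary_edges E ends U. \<rho> e \<noteq> 0 \<and> v \<notin> ends e}"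
  let ?N = "cmod (Z t (U - {v}) (\<lambda>_. 0))"
  have bounded: "\<forall>e. ?\<rho>' e \<le> \<kappa>" using assms(4) \<tau> by (auto simp: override_on_def PiE_iff)
  have "cmod (normalized v (restr E ends ?\<rho>' v)) \<le> R"
    using assms(1,2,6,7) bounded by (intro norm_normalized_restr_le) auto
  moreover have "cmod (t ^ ?n) \<le> s ^ ?n" by (simp add: norm_power power_mono t_le)
  moreover have "cmod (Z t (U - {v}) ?\<rho>') \<le> K ^ (?q + ?n) * ?N"
  proof -
    have "cmod (Z t (U - {v}) ?\<rho>') \<le> K ^ boundary_support (U - {v}) ?\<rho>' * ?N"
      using assms(3) bounded by (simp add: boundary_decay_def)
    also have "\<dots> \<le> K ^ (?q + ?n) * ?N"
      using card_boundary_inner_le_boundary_support_delete[OF assms(2)] K_pos K_le_1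
      by (intro mult_right_mono power_decreasing) auto
    finally show ?thesis .
  qed
  ultimately have "cmod (expansion_term t U v \<rho> \<tau>) \<le> R * s ^ ?n * (K ^ (?q + ?n) * ?N)"
    unfolding expansion_term_def norm_mult using R_nonneg s_nonneg by (intro mult_mono) auto
  thus ?thesis by (simp add: power_add power_mult_distrib algebra_simps)
qed

lemma norm_sum_expansion_terms_nonzero_at_le:
  assumes "U \<subseteq> V" "v \<in> U" "boundary_decay (U - {v})"
  defines "P \<equiv> PiE (inner_edges_at U v) (\<lambda>_. {0..\<kappa>}) - {restrict (\<lambda>_. 0) (inner_edges_at U v)}"
  shows "cmod (\<Sum>\<tau>\<in>P. expansion_term t U v (\<lambda>_. 0) \<tau>) \<le> cmod (Z t (U - {v}) (\<lambda>_. 0)) / 2"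
proof -
  define N where "N = cmod (Z t (U - {v}) (\<lambda>_. 0))"
  define y where "y = 1 + real \<kappa> * s * K"
  have "cmod (expansion_term t U v (\<lambda>_. 0) \<tau>) \<le> R * (s * K) ^ card {e\<in>inner_edges_at U v. \<tau> e \<noteq> 0} * N"
    if \<tau>: "\<tau> \<in> P" for \<tau>
  proof -
    obtain e where "e \<in> inner_edges_at U v" "\<tau> e \<noteq> 0"
      using PiE_ex_nonzero_if_ne_zero[of \<tau> "inner_edges_at U v" "\<lambda>_. {0..\<kappa>}"] \<tau>
      unfolding P_def by blast
    hence "e \<in> incident E ends v" "override_on (\<lambda>_. 0) \<tau> (inner_edges_at U v) e \<noteq> 0"
      by (auto simp: inner_edges_at_def inner_edges_def incident_def override_on_def)
    from norm_expansion_term_le[OF assms(1-3) _ _ this] \<tau> show ?thesis by (simp add: P_def N_def)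
  qed
  hence "cmod (\<Sum>\<tau>\<in>P. expansion_term t U v (\<lambda>_. 0) \<tau>)
      \<le> (\<Sum>\<tau>\<in>P. R * (s * K) ^ card {e\<in>inner_edges_at U v. \<tau> e \<noteq> 0} * N)"
    by (intro order_trans[OF norm_sum sum_mono])
  also have "\<dots> = R * N * (y ^ card (inner_edges_at U v) - 1)"
    using sum_PiE_inner_edges_at_power[of U v] finite_inner_edges_at
    by (simp add: P_def y_def sum_diff1 finite_PiE flip: sum_distrib_left sum_distrib_right)
  also have "\<dots> \<le> N / 2"
  proof -
    have "2 * R * y ^ card (inner_edges_at U v) \<le> K ^ 0"
      using card_inner_edges_at_add_le_degree[of v U "\<lambda>_. 0"] assms(1,2)
      by (intro twice_R_mult_power_le[folded y_def]) auto
    hence "R * (y ^ card (inner_edges_at U v) - 1) \<le> 1 / 2"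
      using R_nonneg by (simp add: algebra_simps)
    from mult_left_mono[OF this, of N] show ?thesis by (simp add: N_def mult_ac)
  qed
  finally show ?thesis by (simp add: N_def)
qed

lemma norm_Z_delete_le:
  assumes "U \<subseteq> V" "v \<in> U" "boundary_decay (U - {v})"
  shows "cmod (Z t (U - {v}) (\<lambda>_. 0)) \<le> 2 * cmod (Z t U (\<lambda>_. 0))"
proof -
  define P where "P = PiE (inner_edges_at U v) (\<lambda>_. {0..\<kappa>})"
  define \<tau>0 where "\<tau>0 = restrict (\<lambda>_. 0::nat) (inner_edges_at U v)"
  have "\<tau>0 \<in> P" "finite P" by (simp_all add: \<tau>0_def P_def finite_inner_edges_at finite_PiE)
  have "override_on (\<lambda>_. 0) \<tau>0 (inner_edges_at U v) = (\<lambda>_. 0)" by (auto simp: override_on_def \<tau>0_def)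
  hence \<tau>0_term: "expansion_term t U v (\<lambda>_. 0) \<tau>0 = Z t (U - {v}) (\<lambda>_. 0)"
    using assms(1,2) normalized_restr_zero by (auto simp: expansion_term_def \<tau>0_def)
  have "Z t U (\<lambda>_. 0) = Z t (U - {v}) (\<lambda>_. 0) + (\<Sum>\<tau>\<in>P - {\<tau>0}. expansion_term t U v (\<lambda>_. 0) \<tau>)"
    unfolding Z_expand[OF finite_subset[OF assms(1) finite_V] assms(2)] P_def[symmetric]
      sum.remove[OF \<open>finite P\<close> \<open>\<tau>0 \<in> P\<close>] \<tau>0_term ..
  hence "cmod (Z t (U - {v}) (\<lambda>_. 0)) - cmod (\<Sum>\<tau>\<in>P - {\<tau>0}. expansion_term t U v (\<lambda>_. 0) \<tau>)
      \<le> cmod (Z t U (\<lambda>_. 0))"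
    by (simp add: norm_diff_ineq)
  with norm_sum_expansion_terms_nonzero_at_le[OF assms] show ?thesis
    unfolding P_def \<tau>0_def by linarith
qed

lemma norm_Z_le_via_boundary_vertex:
  assumes "U \<subseteq> V" "v \<in> U" "boundary_decay (U - {v})" "\<forall>e. \<rho> e \<le> \<kappa>"
    and e: "e \<in> boundary_edges E ends U" "\<rho> e \<noteq> 0" "v \<in> ends e"
  shows "cmod (Z t U \<rho>) \<le> K ^ boundary_support U \<rho> * cmod (Z t U (\<lambda>_. 0))"
proof -
  define y where "y = 1 + real \<kappa> * s * K"
  define m where "m = card (inner_edges_at U v)"
  define p where "p = card {e\<in>boundary_edges E ends U. \<rho> e \<noteq> 0 \<and> v \<in> ends e}"
  define q where "q = card {e\<in>boundary_edges E ends U. \<rho> e \<noteq> 0 \<and> v \<notin> ends e}"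
  define N where "N = cmod (Z t (U - {v}) (\<lambda>_. 0))"
  have "e \<in> incident E ends v" "e \<notin> inner_edges_at U v"
    using e by (auto simp: boundary_edges_def incident_def inner_edges_at_def inner_edges_def)
  hence "cmod (expansion_term t U v \<rho> \<tau>) \<le> R * (s * K) ^ card {e\<in>inner_edges_at U v. \<tau> e \<noteq> 0} * K ^ q * N"
    if "\<tau> \<in> PiE (inner_edges_at U v) (\<lambda>_. {0..\<kappa>})" for \<tau>
    using norm_expansion_term_le[OF assms(1-4) that] e(2) by (simp add: override_on_def q_def N_def)
  hence "cmod (Z t U \<rho>)
      \<le> (\<Sum>\<tau>\<in>PiE (inner_edges_at U v) (\<lambda>_. {0..\<kappa>}). R * (s * K) ^ card {e\<in>inner_edges_at U v. \<tau> e \<noteq> 0} * K ^ q * N)"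
    unfolding Z_expand[OF finite_subset[OF assms(1) finite_V] assms(2)]
    by (intro order_trans[OF norm_sum sum_mono])
  also have "\<dots> = R * K ^ q * N * y ^ m"
    using sum_PiE_inner_edges_at_power[of U v]
    by (simp add: y_def m_def mult_ac flip: sum_distrib_left sum_distrib_right)
  also have "\<dots> \<le> R * K ^ q * (2 * cmod (Z t U (\<lambda>_. 0))) * y ^ m"
    using norm_Z_delete_le[OF assms(1-3)] R_nonneg K_pos s_nonneg
    by (intro mult_right_mono mult_left_mono) (auto simp: N_def y_def)
  also have "\<dots> = (2 * R * y ^ m) * K ^ q * cmod (Z t U (\<lambda>_. 0))" by (simp add: algebra_simps)
  also have "\<dots> \<le> K ^ p * K ^ q * cmod (Z t U (\<lambda>_. 0))"
    using card_inner_edges_at_add_le_degree[of v U \<rho>] assms(1,2) K_pos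
    by (intro mult_right_mono twice_R_mult_power_le[folded y_def]) (auto simp: m_def p_def)
  also have "\<dots> = K ^ boundary_support U \<rho> * cmod (Z t U (\<lambda>_. 0))"
    by (simp add: boundary_support_split[of U \<rho> v] p_def q_def power_add mult_ac)
  finally show ?thesis .
qed

lemma boundary_decay_step:
  assumes "U \<subseteq> V" and decay: "\<And>v. v \<in> U \<Longrightarrow> boundary_decay (U - {v})"
  shows "boundary_decay U"
  unfolding boundary_decay_def
proof (intro allI impI)
  fix \<rho> :: "'e \<Rightarrow> nat" assume \<rho>: "\<forall>e. \<rho> e \<le> \<kappa>"
  show "cmod (Z t U \<rho>) \<le> K ^ boundary_support U \<rho> * cmod (Z t U (\<lambda>_. 0))"
  proof (cases "boundary_support U \<rho> = 0")
    case True
    hence "Z t U \<rho> = Z t U (\<lambda>_. 0)"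
      by (intro Z_cong) (auto simp: boundary_support_def finite_boundary_edges)
    thus ?thesis using True by simp
  next
    case False
    then obtain e v where "e \<in> boundary_edges E ends U" "\<rho> e \<noteq> 0" "v \<in> U" "v \<in> ends e"
      by (auto simp: boundary_support_def card_gt_0_iff boundary_edges_def)
    thus ?thesis using norm_Z_le_via_boundary_vertex assms \<rho> by blast
  qed
qed

lemma Z_nonzero_and_boundary_decay:
  assumes "U \<subseteq> V"
  shows "Z t U (\<lambda>_. 0) \<noteq> 0 \<and> boundary_decay U"
  using finite_subset[OF assms finite_V] assms
proof (induction U rule: finite_psubset_induct)
  case (psubset U)
  show ?case
  proof (cases "U = {}")
    case True
    have "boundary_edges E ends {} = {}" by (simp add: boundary_edges_def)
    thus ?thesis using True by (simp add: Z_empty boundary_decay_def boundary_support_def)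
  next
    case False
    then obtain v where "v \<in> U" by blast
    have IH: "Z t (U - {w}) (\<lambda>_. 0) \<noteq> 0 \<and> boundary_decay (U - {w})" if "w \<in> U" for w
      using psubset that by auto
    have "0 < cmod (Z t (U - {v}) (\<lambda>_. 0))" using IH[OF \<open>v \<in> U\<close>] by simp
    also have "\<dots> \<le> 2 * cmod (Z t U (\<lambda>_. 0))"
      using norm_Z_delete_le psubset.prems IH \<open>v \<in> U\<close> by blast
    finally show ?thesis using boundary_decay_step psubset.prems IH by auto
  qed
qed

end

lemma holant_poly_eq_Z: "holant_poly \<kappa> V E ends \<pi> t = Z t V (\<lambda>_. 0)"
proof -
  have "inner_edges E ends V = E" using ends_subset by (auto simp: inner_edges_def)
  moreover have "weight V E ends \<pi> \<sigma> / (\<Prod>v\<in>V. sfun (\<pi> v) (zero_tuple (\<pi> v)))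
      = (\<Prod>w\<in>V. normalized w (restr E ends (override_on (\<lambda>_. 0) \<sigma> E) w))" for \<sigma>
  proof -
    have "restr E ends (override_on (\<lambda>_. 0) \<sigma> E) w = restr E ends \<sigma> w" for w
      by (rule restr_cong) (auto simp: override_on_def incident_def)
    thus ?thesis by (simp add: weight_def normalized_def prod_dividef)
  qed
  ultimately show ?thesis
    unfolding holant_poly_def Z_def assignments_def sum_divide_distrib
    by (intro sum.cong) (auto simp: times_divide_eq_left[symmetric] mult.commute)
qed

lemma Z_at_0:
  assumes "U \<subseteq> V"
  shows "Z 0 U (\<lambda>_. 0) = 1"
proof -
  define P where "P = PiE (inner_edges E ends U) (\<lambda>_. {0..\<kappa>})"
  define \<sigma>0 where "\<sigma>0 = restrict (\<lambda>_. 0::nat) (inner_edges E ends U)"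
  define g where "g \<sigma> = (\<Prod>w\<in>U. normalized w (restr E ends (override_on (\<lambda>_. 0) \<sigma> (inner_edges E ends U)) w))
      * 0 ^ card {e\<in>inner_edges E ends U. \<sigma> e \<noteq> 0}" for \<sigma>
  have "finite P" using finite_E by (simp add: P_def inner_edges_def finite_PiE)
  have vanish: "g \<sigma> = 0" if \<sigma>: "\<sigma> \<in> P - {\<sigma>0}" for \<sigma>
  proof -
    obtain e where "e \<in> inner_edges E ends U" "\<sigma> e \<noteq> 0"
      using PiE_ex_nonzero_if_ne_zero[of \<sigma> "inner_edges E ends U" "\<lambda>_. {0..\<kappa>}"] \<sigma>
      unfolding P_def \<sigma>0_def by blast
    hence "card {e\<in>inner_edges E ends U. \<sigma> e \<noteq> 0} \<noteq> 0"
      using finite_E by (auto simp: inner_edges_def)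
    thus ?thesis by (simp add: g_def)
  qed
  have "Z 0 U (\<lambda>_. 0) = sum g P" unfolding Z_def g_def P_def ..
  also have "\<dots> = g \<sigma>0 + sum g (P - {\<sigma>0})"
    by (rule sum.remove[OF \<open>finite P\<close>]) (simp add: P_def \<sigma>0_def)
  also have "sum g (P - {\<sigma>0}) = 0" using vanish by simp
  also have "g \<sigma>0 = 1"
  proof -
    have "override_on (\<lambda>_. 0) \<sigma>0 (inner_edges E ends U) = (\<lambda>_. 0)"
      by (auto simp: override_on_def \<sigma>0_def)
    thus ?thesis using assms
      by (auto simp: g_def \<sigma>0_def intro!: prod.neutral normalized_restr_zero)
  qed
  finally show ?thesis by simp
qed

lemma holant_poly_at_0: "holant_poly \<kappa> V E ends \<pi> 0 = 1"
  by (simp add: holant_poly_eq_Z Z_at_0)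

lemma holant_poly_nonzero:
  assumes "cmod t \<le> s" "0 < K" "K \<le> 1" "K * (1 + real \<kappa> * s * K) \<le> 1" "2 * R \<le> K ^ \<Delta>"
  shows "holant_poly \<kappa> V E ends \<pi> t \<noteq> 0"
  using Z_nonzero_and_boundary_decay[OF assms order_refl] by (simp add: holant_poly_eq_Z)

lemma prod_value_at_zero_nonzero: "(\<Prod>v\<in>V. sfun (\<pi> v) (zero_tuple (\<pi> v))) \<noteq> 0"
  using value_at_zero_nonzero finite_V by simp

lemma holomorphic_holant_poly: "(\<lambda>t. holant_poly \<kappa> V E ends \<pi> t) holomorphic_on A"
  unfolding holant_poly_def using prod_value_at_zero_nonzero by (intro holomorphic_intros)

lemma holant_eq_holant_poly_1:
  "holant \<kappa> V E ends \<pi> = holant_poly \<kappa> V E ends \<pi> 1 * (\<Prod>v\<in>V. sfun (\<pi> v) (zero_tuple (\<pi> v)))"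
  using prod_value_at_zero_nonzero by (simp add: holant_poly_def holant_def)

end

lemma finite_tuples: "finite (tuples \<kappa> d)"
proof -
  have "tuples \<kappa> d = {xs. set xs \<subseteq> {0..\<kappa>} \<and> length xs = d}" by (auto simp: tuples_def)
  thus ?thesis using finite_lists_length_eq[of "{0..\<kappa>}" d] by simp
qed

lemma ratio_le_r_set:
  assumes "finite F" "f \<in> F" "x \<in> tuples \<kappa> (arity f) - {zero_tuple f}"
  shows "cmod (sfun f x) / cmod (sfun f (zero_tuple f)) \<le> r_set \<kappa> F"
proof -
  have "cmod (sfun f x) / cmod (sfun f (zero_tuple f)) \<le> r_sig \<kappa> f"
    unfolding r_sig_def by (rule Max_ge) (use assms(3) finite_tuples in auto)
  also have "\<dots> \<le> r_set \<kappa> F"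
    unfolding r_set_def by (rule Max_ge) (use assms(1,2) in auto)
  finally show ?thesis .
qed

lemma r_set_nonneg: "finite F \<Longrightarrow> 0 \<le> r_set \<kappa> F"
  unfolding r_set_def by (rule Max_ge) auto

theorem mainTheorem10:
  fixes \<kappa> \<Delta> :: nat
    and F :: "signature set"
    and V :: "'v set" and E :: "'e::linorder set" and ends :: "'e \<Rightarrow> 'v set"
    and \<pi> :: "'v \<Rightarrow> signature"
  assumes "finite F" and "F \<subseteq> F0"
    and "r_set \<kappa> F \<le> max (inverse (2 * sqrt (exp 1)) * inverse (sqrt ((real \<Delta> * real \<kappa> * exp 1) ^ \<Delta>)))
                            (0.2058 / (real \<kappa> + 1) ^ \<Delta>)"
    and "graph V E ends"
    and "\<forall>v\<in>V. card (incident E ends v) \<le> \<Delta>"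
    and "\<forall>v\<in>V. \<pi> v \<in> F \<and> arity (\<pi> v) = card (incident E ends v)"
  shows "holant \<kappa> V E ends \<pi> \<noteq> 0
    \<and> summable (\<lambda>n. norm (taylor_coeff (\<lambda>t. Ln (holant_poly \<kappa> V E ends \<pi> t)) n))"
proof -
  interpret bounded_holant \<kappa> V E ends \<pi> \<Delta> "r_set \<kappa> F"
    using assms(1,2,4-6) ratio_le_r_set r_set_nonneg by unfold_locales (auto simp: F0_def)
  obtain K where K: "0 < K" "K \<le> 1" "K * (1 + real \<kappa> * (21/20) * K) \<le> 1" "2 * r_set \<kappa> F \<le> K ^ \<Delta>"
    using contraction_rate_exists[OF assms(3)] by blast
  have nonzero: "holant_poly \<kappa> V E ends \<pi> t \<noteq> 0" if "cmod t < 21/20" for t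
    using holant_poly_nonzero[OF _ K] that by simp
  hence "holant \<kappa> V E ends \<pi> \<noteq> 0"
    using prod_value_at_zero_nonzero by (simp add: holant_eq_holant_poly_1)
  moreover have "summable (\<lambda>n. norm (taylor_coeff (\<lambda>t. Ln (holant_poly \<kappa> V E ends \<pi> t)) n * 1 ^ n))"
    using nonzero holant_poly_at_0
    by (intro summable_norm_taylor_coeff_Ln[of _ "21/20"] holomorphic_holant_poly) auto
  ultimately show ?thesis by simp
qed

end
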